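(* For all $\lambda$-terms $M,N$: if $M \twoheadrightarrow_\beta N$, then $\mathrm{BT}^c(M) \geq \mathrm{BT}^c(N)$, i.e. $N$ improves $M$ globally.
   Context: Untyped $\lambda$-calculus modulo $\alpha$; $\twoheadrightarrow_\beta$ is the reflexive-transitive closure of $\beta$-reduction. A head reduction step is a $\beta$-step of the form $\lambda x_1\ldots x_n.(\lambda y.M)NN_1\ldots N_m \to \lambda x_1\ldots x_n.M[y:=N]N_1\ldots N_m$ ($n,m\ge0$); a head normal form (hnf) is a term $\lambda x_1\ldots x_n.\,yN_1\ldots N_m$. The clocked Böhm tree $\mathrm{BT}^c(M)$ is the annotated, possibly infinite tree defined coinductively: if $M$ has no hnf then $\mathrm{BT}^c(M)=\bot$; otherwise the (unique) head reduction of $M$ to hnf has some length $k$, say $M \to_h^k \lambda x_1\ldots x_n.\,yM_1\ldots M_m$, and then $\mathrm{BT}^c(M)$ is the tree $\lambda x_1\ldots x_n.\,y\,\mathrm{BT}^c(M_1)\ldots\mathrm{BT}^c(M_m)$ whose root node carries the annotation $k$. Positions are finite sequences over $\{0,1,2\}$: the empty sequence is the root, $0p$ in $\lambda x.T$ is position $p$ of $T$, $1p$ (resp. $2p$) in an application $T_1T_2$ is position $p$ of $T_1$ (resp. $T_2$). For annotated trees $T_1,T_2$, write $T_1 \ge T_2$ if $T_1$ and $T_2$ are identical after erasing all annotations, and for every position $p$ either neither subtree at $p$ carries a root annotation, or both do, with annotations $k_1,k_2$ satisfying $k_1 \ge k_2$. $N$ improves $M$ globally if $\mathrm{BT}^c(N)\le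 \mathrm{BT}^c(M)$. *)

theory Defs
  imports Main
begin

datatype dB = is_Var: Var (var_of: nat) | is_App: App (fun_of: dB) (arg_of: dB) | is_Abs: Abs (body_of: dB)

primrec lift :: "dB \<Rightarrow> nat \<Rightarrow> dB" where
  "lift (Var i) k = (if i < k then Var i else Var (i + 1))"
| "lift (App s t) k = App (lift s k) (lift t k)"
| "lift (Abs s) k = Abs (lift s (k + 1))"

primrec subst :: "dB \<Rightarrow> dB \<Rightarrow> nat \<Rightarrow> dB" where
  "subst (Var i) s k = (if k < i then Var (i - 1) else if i = k then s else Var i)"
| "subst (App t u) s k = App (subst t s k) (subst u s k)"
| "subst (Abs t) s k = Abs (subst t (lift s 0) (k + 1))"

inductive beta :: "dB \<Rightarrow> dB \<Rightarrow> bool" where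
  beta_redex: "beta (App (Abs s) t) (subst s t 0)"
| beta_appL: "beta s t \<Longrightarrow> beta (App s u) (App t u)"
| beta_appR: "beta s t \<Longrightarrow> beta (App u s) (App u t)"
| beta_abs: "beta s t \<Longrightarrow> beta (Abs s) (Abs t)"

abbreviation beta_star :: "dB \<Rightarrow> dB \<Rightarrow> bool" where
  "beta_star \<equiv> beta\<^sup>*\<^sup>*"

inductive head :: "dB \<Rightarrow> dB \<Rightarrow> bool" where
  head_redex: "head (App (Abs s) t) (subst s t 0)"
| head_app: "head s s' \<Longrightarrow> (\<forall>u. s \<noteq> Abs u) \<Longrightarrow> head (App s t) (App s' t)"
| head_abs: "head s s' \<Longrightarrow> head (Abs s) (Abs s')"

fun is_var_app :: "dB \<Rightarrow> bool" where
  "is_var_app (Var y) = True"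
| "is_var_app (App s t) = is_var_app s"
| "is_var_app (Abs s) = False"

fun is_hnf :: "dB \<Rightarrow> bool" where
  "is_hnf (Abs s) = is_hnf s"
| "is_hnf t = is_var_app t"

definition has_hnf :: "dB \<Rightarrow> bool" where
  "has_hnf M \<longleftrightarrow> (\<exists>k N. (head ^^ k) M N \<and> is_hnf N)"

definition hlen :: "dB \<Rightarrow> nat" where
  "hlen M = (THE k. \<exists>N. (head ^^ k) M N \<and> is_hnf N)"

definition hnf :: "dB \<Rightarrow> dB" where
  "hnf M = (THE N. \<exists>k. (head ^^ k) M N \<and> is_hnf N)"

text \<open>Nodes mirror lambda-term syntax; every non-bottom node carries an
  annotation of type 'a (used with 'a = nat option: None = no annotation).\<close>
codatatype 'a atree =
    ABot
  | AVar 'a nat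
  | ALam 'a "'a atree"
  | AApp 'a "'a atree" "'a atree"

text \<open>The state (M, True) means: compute
  BT^c(M) afresh; (M, False) means: M is a part of the spine of an hnf already
  computed, to be copied (without annotation), its arguments being computed
  afresh.\<close>
primcorec bt_gen :: "dB \<times> bool \<Rightarrow> nat option atree" where
  "bt_gen x =
    (if snd x \<and> \<not> has_hnf (fst x) then ABot
     else if is_Var (if snd x then hnf (fst x) else fst x)
       then AVar (if snd x then Some (hlen (fst x)) else None)
                 (var_of (if snd x then hnf (fst x) else fst x))
     else if is_Abs (if snd x then hnf (fst x) else fst x)
       then ALam (if snd x then Some (hlen (fst x)) else None)
                 (bt_gen (body_of (if snd x then hnf (fst x) else fst x), False))
     else AApp (if snd x then Some (hlen (fst x)) else None)
               (bt_gen (fun_of (if snd x then hnf (fst x) else fst x), False))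
               (bt_gen (arg_of (if snd x then hnf (fst x) else fst x), True)))"

definition BTc :: "dB \<Rightarrow> nat option atree" where
  "BTc M = bt_gen (M, True)"

primrec subtree_at :: "'a atree \<Rightarrow> nat list \<Rightarrow> 'a atree option" where
  "subtree_at t [] = Some t"
| "subtree_at t (i # p) =
     (case t of
        ALam _ u \<Rightarrow> (if i = 0 then subtree_at u p else None)
      | AApp _ u v \<Rightarrow> (if i = 1 then subtree_at u p else if i = 2 then subtree_at v p else None)
      | _ \<Rightarrow> None)"

definition root_ann :: "nat option atree \<Rightarrow> nat option" where
  "root_ann t = (case t of ABot \<Rightarrow> None | AVar a _ \<Rightarrow> a | ALam a _ \<Rightarrow> a | AApp a _ _ \<Rightarrow> a)"

definition erase :: "nat option atree \<Rightarrow> nat option atree" where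
  "erase t = map_atree (\<lambda>_. None) t"

definition tree_ge :: "nat option atree \<Rightarrow> nat option atree \<Rightarrow> bool" where
  "tree_ge T1 T2 \<longleftrightarrow>
     erase T1 = erase T2 \<and>
     (\<forall>p s1 s2. subtree_at T1 p = Some s1 \<longrightarrow> subtree_at T2 p = Some s2 \<longrightarrow>
        (root_ann s1 = None \<and> root_ann s2 = None) \<or>
        (\<exists>k1 k2. root_ann s1 = Some k1 \<and> root_ann s2 = Some k2 \<and> k1 \<ge> k2))"

definition improves_globally :: "dB \<Rightarrow> dB \<Rightarrow> bool" where
  "improves_globally N M \<longleftrightarrow> tree_ge (BTc M) (BTc N)"

end

theory Submission
  imports Defs
begin

text \<open>It suffices to consider one step of Takahashi's parallel reduction M \<Rightarrow> N, since these
  steps generate beta reduction. Every head step of M is either absorbed by the parallel step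
  or matched by a head step of N, so N reaches a head normal form in no more steps, and the
  two hnfs have the same skeleton with parallel-reducing arguments. Conversely, a weighted
  standardisation argument (performing the leftmost contracted redex first decreases the
  weight) shows that M has an hnf whenever N has one. Iterating, the states generating the
  two clocked Boehm trees stay related, which yields the comparison coinductively.\<close>

lemma lift_lift: "i < k + 1 \<Longrightarrow> lift (lift t i) (Suc k) = lift (lift t k) i"
  by (induct t arbitrary: i k) auto

lemma lift_subst: "j < i + 1 \<Longrightarrow> lift (subst t s j) i = subst (lift t (i + 1)) (lift s i) j"
  by (induct t arbitrary: i j s) (simp_all add: diff_Suc split: nat.split, auto simp: lift_lift)

lemma lift_subst_lt: "i < j + 1 \<Longrightarrow> lift (subst t s j) i = subst (lift t i) (lift s i) (j + 1)"
  by (induct t arbitrary: i j s) (auto simp: lift_lift)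

lemma subst_lift: "subst (lift t k) s k = t"
  by (induct t arbitrary: k s) auto

lemma subst_subst:
  "i < j + 1 \<Longrightarrow> subst (subst t (lift v i) (Suc j)) (subst u v j) i = subst (subst t u i) v j"
proof (induct t arbitrary: i j u v)
  case (Abs t)
  have "lift (lift v i) 0 = lift (lift v 0) (Suc i)" using lift_lift[of 0 i v] by simp
  moreover have "subst (lift u 0) (lift v 0) (Suc j) = lift (subst u v j) 0"
    using lift_subst_lt[of 0 j u v] by simp
  moreover have "Suc i < Suc (Suc j)" using Abs by simp
  ultimately show ?case using Abs(1)[of "Suc i" "Suc j" "lift v 0" "lift u 0"] by simp
qed (simp_all add: diff_Suc subst_lift lift_subst lift_subst_lt split: nat.split)

primrec occ :: "nat \<Rightarrow> dB \<Rightarrow> nat" where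
  "occ k (Var i) = (if i = k then 1 else 0)"
| "occ k (App s t) = occ k s + occ k t"
| "occ k (Abs s) = occ (Suc k) s"

lemma occ_lift_lt: "j < m \<Longrightarrow> occ j (lift t m) = occ j t"
  by (induct t arbitrary: j m) auto

lemma occ_lift_ge: "m \<le> j \<Longrightarrow> occ (Suc j) (lift t m) = occ j t"
  by (induct t arbitrary: j m) auto

lemma occ_lift_eq: "occ m (lift t m) = 0"
  by (induct t arbitrary: m) auto

lemma occ_subst_Suc: "j \<le> k \<Longrightarrow> occ j u = 0 \<Longrightarrow> occ j (subst t u (Suc k)) = occ j t"
  by (induct t arbitrary: j k u) (auto simp: occ_lift_ge)

lemma occ_subst: "j \<le> k \<Longrightarrow> occ k (subst t u j) = occ (Suc k) t + occ j t * occ k u"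
  by (induct t arbitrary: j k u) (auto simp: occ_lift_ge algebra_simps)

text \<open>Parallel reduction with a weight that counts each argument once per copy made of it;
  the weight strictly decreases when the leftmost contracted redex is performed first.\<close>
inductive par_wt :: "dB \<Rightarrow> dB \<Rightarrow> nat \<Rightarrow> bool" where
  par_wt_Var: "par_wt (Var i) (Var i) 0"
| par_wt_Abs: "par_wt s t a \<Longrightarrow> par_wt (Abs s) (Abs t) (Suc a)"
| par_wt_App: "par_wt s t a \<Longrightarrow> par_wt u v b \<Longrightarrow> par_wt (App s u) (App t v) (a + b + 1)"
| par_wt_beta: "par_wt s t a \<Longrightarrow> par_wt u v b \<Longrightarrow>
    par_wt (App (Abs s) u) (subst t v 0) (a + occ 0 t * b + 1)"

definition par :: "dB \<Rightarrow> dB \<Rightarrow> bool" where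
  "par s t \<longleftrightarrow> (\<exists>a. par_wt s t a)"

lemma par_wt_lift: "par_wt s t a \<Longrightarrow> par_wt (lift s k) (lift t k) a"
proof (induct arbitrary: k rule: par_wt.induct)
  case (par_wt_beta s t a u v b)
  have "par_wt (App (Abs (lift s (Suc k))) (lift u k)) (subst (lift t (Suc k)) (lift v k) 0)
          (a + occ 0 (lift t (Suc k)) * b + 1)"
    using par_wt.par_wt_beta[OF par_wt_beta(2,4)] .
  then show ?case using lift_subst[of 0 k t v] by (simp add: occ_lift_lt)
qed (auto intro: par_wt.intros par_wt_App[simplified])

lemma par_wt_subst:
  "par_wt s t a \<Longrightarrow> par_wt u v b \<Longrightarrow>
     \<exists>c. par_wt (subst s u k) (subst t v k) c \<and> c \<le> a + occ k t * b"
proof (induct arbitrary: k u v b rule: par_wt.induct)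
  case (par_wt_Var i)
  then show ?case by (auto intro: par_wt.intros)
next
  case (par_wt_Abs s t a)
  from par_wt_Abs(2)[of "lift u 0" "lift v 0" b "Suc k"] par_wt_Abs(3) obtain c where
    "par_wt (subst s (lift u 0) (Suc k)) (subst t (lift v 0) (Suc k)) c" "c \<le> a + occ (Suc k) t * b"
    by (auto intro: par_wt_lift)
  then show ?case by (auto intro!: exI[of _ "Suc c"] intro: par_wt.intros)
next
  case (par_wt_App s t a w x b')
  from par_wt_App(2)[OF par_wt_App(5)] par_wt_App(4)[OF par_wt_App(5)] obtain c1 c2 where
    "par_wt (subst s u k) (subst t v k) c1" "c1 \<le> a + occ k t * b"
    "par_wt (subst w u k) (subst x v k) c2" "c2 \<le> b' + occ k x * b"
    by blast
  then show ?case
    by (auto intro!: exI[of _ "c1 + c2 + 1"] intro: par_wt.intros simp: algebra_simps)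
next
  case (par_wt_beta s t a w x b')
  from par_wt_beta(2)[of "lift u 0" "lift v 0" b "Suc k"] par_wt_beta(5) obtain c1 where
    c1: "par_wt (subst s (lift u 0) (Suc k)) (subst t (lift v 0) (Suc k)) c1"
        "c1 \<le> a + occ (Suc k) t * b"
    by (auto intro: par_wt_lift)
  from par_wt_beta(4)[OF par_wt_beta(5)] obtain c2 where
    c2: "par_wt (subst w u k) (subst x v k) c2" "c2 \<le> b' + occ k x * b" by blast
  have "occ 0 (subst t (lift v 0) (Suc k)) = occ 0 t"
    by (rule occ_subst_Suc) (auto simp: occ_lift_eq)
  then have step: "par_wt (App (Abs (subst s (lift u 0) (Suc k))) (subst w u k))
      (subst (subst t x 0) v k) (c1 + occ 0 t * c2 + 1)"
    using par_wt.par_wt_beta[OF c1(1) c2(1)] subst_subst[of 0 k t v x] by simp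
  have "occ 0 t * c2 \<le> occ 0 t * (b' + occ k x * b)" using c2(2) by simp
  then have "c1 + occ 0 t * c2 + 1 \<le> (a + occ 0 t * b' + 1) + occ k (subst t x 0) * b"
    using c1(2) occ_subst[of 0 k t x] by (simp add: algebra_simps)
  then show ?case using step by auto
qed

lemma par_subst: "par s t \<Longrightarrow> par u v \<Longrightarrow> par (subst s u k) (subst t v k)"
  unfolding par_def using par_wt_subst by blast

lemma par_refl: "par t t"
  unfolding par_def by (induct t) (auto intro: par_wt.intros)

lemma par_AbsI: "par s t \<Longrightarrow> par (Abs s) (Abs t)"
  unfolding par_def by (auto intro: par_wt_Abs)

lemma par_AppI: "par s t \<Longrightarrow> par u v \<Longrightarrow> par (App s u) (App t v)"
  unfolding par_def by (auto intro: par_wt_App)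

lemma par_betaI: "par s t \<Longrightarrow> par u v \<Longrightarrow> par (App (Abs s) u) (subst t v 0)"
  unfolding par_def by (auto intro: par_wt_beta)

lemma par_VarE: "par (Var i) N \<Longrightarrow> N = Var i"
  unfolding par_def by (auto elim: par_wt.cases)

lemma par_wt_AbsD: "par_wt (Abs s) N a \<Longrightarrow> \<exists>t a'. N = Abs t \<and> par_wt s t a'"
  by (cases rule: par_wt.cases) auto

lemma par_AbsE:
  assumes "par (Abs s) N"
  obtains t where "N = Abs t" "par s t"
  using assms par_wt_AbsD unfolding par_def by blast

lemma par_AppE:
  assumes "par (App s u) N" "\<not> is_Abs s"
  obtains t v where "N = App t v" "par s t" "par u v"
proof -
  from assms(1) obtain a where "par_wt (App s u) N a" by (auto simp: par_def)
  then have "\<exists>t v. N = App t v \<and> par s t \<and> par u v"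
    using assms(2) by (cases rule: par_wt.cases) (auto simp: par_def)
  then show thesis using that by blast
qed

lemma par_redexE:
  assumes "par (App (Abs s) u) N"
  obtains t v where "N = App (Abs t) v" "par s t" "par u v"
    | t v where "N = subst t v 0" "par s t" "par u v"
proof -
  from assms obtain a where "par_wt (App (Abs s) u) N a" by (auto simp: par_def)
  then have "(\<exists>t v. N = App (Abs t) v \<and> par s t \<and> par u v) \<or>
      (\<exists>t v. N = subst t v 0 \<and> par s t \<and> par u v)"
    unfolding par_def by (cases rule: par_wt.cases) (blast dest: par_wt_AbsD)+
  then show thesis using that by blast
qed

lemma beta_par: "beta s t \<Longrightarrow> par s t"
  by (induct rule: beta.induct) (auto intro: par_refl par_AbsI par_AppI par_betaI)

lemma relpowp_normal_unique:
  assumes det: "\<And>x y z. R x y \<Longrightarrow> R x z \<Longrightarrow> y = z"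
  shows "(R ^^ k) x y \<Longrightarrow> \<nexists>z. R y z \<Longrightarrow> (R ^^ k') x y' \<Longrightarrow> \<nexists>z. R y' z \<Longrightarrow> k = k' \<and> y = y'"
proof (induct k arbitrary: x k')
  case 0
  then have "x = y" by simp
  show ?case
  proof (cases k')
    case (Suc m)
    then show ?thesis using 0 \<open>x = y\<close> by (metis relpowp_Suc_D2)
  qed (use 0 \<open>x = y\<close> in simp)
next
  case (Suc k)
  from Suc.prems(1) obtain x1 where x1: "R x x1" "(R ^^ k) x1 y" by (blast dest: relpowp_Suc_D2)
  show ?case
  proof (cases k')
    case 0
    then show ?thesis using Suc.prems(3,4) x1(1) by simp
  next
    case (Suc m)
    with Suc.prems(3) obtain x2 where "R x x2" "(R ^^ m) x2 y'" by (blast dest: relpowp_Suc_D2)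
    with x1 det have "(R ^^ m) x1 y'" by metis
    then show ?thesis using Suc.hyps[OF x1(2) Suc.prems(2) _ Suc.prems(4)] \<open>k' = Suc m\<close> by simp
  qed
qed

lemma head_Abs_iff: "head (Abs s) t \<longleftrightarrow> (\<exists>s'. t = Abs s' \<and> head s s')"
proof
  show "head (Abs s) t \<Longrightarrow> \<exists>s'. t = Abs s' \<and> head s s'" by (cases rule: head.cases) auto
qed (auto intro: head_abs)

lemma relpowp_head_AbsD: "(head ^^ n) (Abs s) H \<Longrightarrow> \<exists>H0. H = Abs H0 \<and> (head ^^ n) s H0"
proof (induct n arbitrary: s)
  case (Suc n)
  then obtain y where "head (Abs s) y" "(head ^^ n) y H" by (blast dest: relpowp_Suc_D2)
  then obtain s' where "head s s'" "(head ^^ n) (Abs s') H" by (auto simp: head_Abs_iff)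
  with Suc.hyps show ?case by (blast intro: relpowp_Suc_I2)
qed simp

lemma relpowp_head_AbsI: "(head ^^ n) s H \<Longrightarrow> (head ^^ n) (Abs s) (Abs H)"
proof (induct n arbitrary: s)
  case (Suc n)
  then obtain s' where "head s s'" "(head ^^ n) s' H" by (blast dest: relpowp_Suc_D2)
  with Suc.hyps show ?case by (blast intro: relpowp_Suc_I2 head_abs)
qed simp

lemma head_det: "head M A \<Longrightarrow> head M B \<Longrightarrow> A = B"
proof (induct arbitrary: B rule: head.induct)
  case (head_redex s t)
  from head_redex show ?case
  proof (cases rule: head.cases)
    case (head_app s')
    then show ?thesis by blast
  qed simp
next
  case (head_app s s' t)
  from head_app.prems show ?case
  proof (cases rule: head.cases)
    case (head_app s'')
    then show ?thesis using head_app.hyps(2) by simp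
  qed (use head_app.hyps(3) in simp)
next
  case (head_abs s s')
  from head_abs.prems obtain s'' where "B = Abs s''" "head s s''" unfolding head_Abs_iff by blast
  then show ?case using head_abs.hyps(2) by blast
qed

lemma head_AppD: "head (App s t) M' \<Longrightarrow> is_Abs s \<or> (\<exists>s'. head s s')"
  by (cases rule: head.cases) auto

lemma var_app_no_head: "is_var_app M \<Longrightarrow> \<not> head M M'"
proof (induct M arbitrary: M')
  case (Var i)
  then show ?case by (auto elim: head.cases)
next
  case (App s t)
  then show ?case by (cases s) (auto dest: head_AppD)
qed simp

lemma hnf_no_head: "is_hnf M \<Longrightarrow> \<not> head M M'"
  by (induct M arbitrary: M') (auto simp: head_Abs_iff var_app_no_head)

lemma var_app_hnf: "is_var_app H \<Longrightarrow> is_hnf H"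
  by (cases H) auto

lemma hnf_has_hnf: "is_hnf M \<Longrightarrow> has_hnf M"
  unfolding has_hnf_def by (rule exI[of _ 0]) simp

lemma hlen_hnf_eqI:
  assumes "(head ^^ k) M H" "is_hnf H"
  shows "hlen M = k" "hnf M = H"
proof -
  have unique: "k' = k \<and> H' = H" if "(head ^^ k') M H'" "is_hnf H'" for k' H'
    using relpowp_normal_unique[where R = head] head_det hnf_no_head that assms by blast
  show "hlen M = k" unfolding hlen_def using assms unique by blast
  show "hnf M = H" unfolding hnf_def using assms unique by blast
qed

lemma has_hnf_Abs: "has_hnf s \<Longrightarrow> has_hnf (Abs s)"
  unfolding has_hnf_def by (metis relpowp_head_AbsI is_hnf.simps(1))

lemma has_hnf_head_rtranclp: "head\<^sup>*\<^sup>* M L \<Longrightarrow> has_hnf L \<Longrightarrow> has_hnf M"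
  unfolding has_hnf_def rtranclp_power by (blast intro: relpowp_trans)

section \<open>Head normalisation is reflected by parallel reduction\<close>

inductive wh :: "dB \<Rightarrow> dB \<Rightarrow> bool" where
  wh_redex: "wh (App (Abs s) t) (subst s t 0)"
| wh_app: "wh s s' \<Longrightarrow> \<not> is_Abs s \<Longrightarrow> wh (App s t) (App s' t)"

lemma wh_not_Abs: "wh s t \<Longrightarrow> \<not> is_Abs s"
  by (induct rule: wh.induct) auto

lemma wh_head: "wh s t \<Longrightarrow> head s t"
  by (induct rule: wh.induct) (auto intro: head.intros)

lemma wh_rtranclp_App: "wh\<^sup>*\<^sup>* s L \<Longrightarrow> wh\<^sup>*\<^sup>* (App s u) (App L u)"
  by (induct rule: rtranclp_induct) (auto intro: rtranclp.rtrancl_into_rtrancl wh_app dest: wh_not_Abs)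

text \<open>Internal parallel reduction: a parallel step that contracts no redex on the weak-head
  spine.\<close>
inductive ipar :: "dB \<Rightarrow> dB \<Rightarrow> bool" where
  ipar_Var: "ipar (Var i) (Var i)"
| ipar_Abs: "par s t \<Longrightarrow> ipar (Abs s) (Abs t)"
| ipar_App: "ipar s t \<Longrightarrow> par u v \<Longrightarrow> ipar (App s u) (App t v)"

lemma ipar_is_Abs: "ipar L N \<Longrightarrow> is_Abs N = is_Abs L"
  by (induct rule: ipar.induct) auto

lemma par_wt_wh_ipar: "par_wt M N a \<Longrightarrow> \<exists>L. wh\<^sup>*\<^sup>* M L \<and> ipar L N"
proof (induct a arbitrary: M N rule: less_induct)
  case (less a)
  from less.prems show ?case
  proof cases
    case (par_wt_Var i)
    then show ?thesis using ipar_Var by blast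
  next
    case (par_wt_Abs s t a')
    then have "ipar M N" using ipar_Abs[of s t] by (auto simp: par_def)
    then show ?thesis by blast
  next
    case (par_wt_App s t a1 u v b)
    then obtain L where L: "wh\<^sup>*\<^sup>* s L" "ipar L t" using less.hyps[of a1] by auto
    have "ipar (App L u) N" using par_wt_App ipar_App[OF L(2), of u v] by (auto simp: par_def)
    moreover have "wh\<^sup>*\<^sup>* M (App L u)" using par_wt_App L(1) by (simp add: wh_rtranclp_App)
    ultimately show ?thesis by blast
  next
    case (par_wt_beta s t a1 u v b)
    obtain c where c: "par_wt (subst s u 0) N c" "c \<le> a1 + occ 0 t * b"
      using par_wt_subst[OF par_wt_beta(4,5)] par_wt_beta(2) by blast
    with par_wt_beta less.hyps[of c] obtain L where "wh\<^sup>*\<^sup>* (subst s u 0) L" "ipar L N"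
      by auto
    moreover have "wh M (subst s u 0)" using par_wt_beta by (simp add: wh_redex)
    ultimately show ?thesis by (blast intro: converse_rtranclp_into_rtranclp)
  qed
qed

lemma ipar_head_step:
  "ipar L N \<Longrightarrow> \<not> is_Abs L \<Longrightarrow> \<not> is_var_app L \<Longrightarrow> \<exists>L' N'. head L L' \<and> head N N' \<and> par L' N'"
proof (induct rule: ipar.induct)
  case (ipar_App s t u v)
  show ?case
  proof (cases "is_Abs s")
    case True
    with ipar_App.hyps(1) obtain s0 t0 where "s = Abs s0" "t = Abs t0" "par s0 t0"
      by (auto elim: ipar.cases)
    then show ?thesis using ipar_App.hyps(3) by (auto intro!: head_redex par_subst)
  next
    case False
    with ipar_App obtain s' t' where "head s s'" "head t t'" "par s' t'" by auto
    moreover have "\<forall>w. s \<noteq> Abs w" "\<forall>w. t \<noteq> Abs w"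
      using False ipar_is_Abs[OF ipar_App.hyps(1)] by auto
    ultimately show ?thesis using ipar_App.hyps(3) by (blast intro: head_app par_AppI)
  qed
qed simp_all

lemma par_head_progress:
  assumes "par M N"
  shows "has_hnf M
    \<or> (\<exists>s t. head\<^sup>*\<^sup>* M (Abs s) \<and> N = Abs t \<and> par s t)
    \<or> (\<exists>M' N'. head\<^sup>*\<^sup>* M M' \<and> head N N' \<and> par M' N')"
proof -
  from assms obtain L where "wh\<^sup>*\<^sup>* M L" "ipar L N" unfolding par_def using par_wt_wh_ipar by blast
  moreover from this have M_L: "head\<^sup>*\<^sup>* M L" by (metis mono_rtranclp wh_head)
  ultimately consider "is_Abs L" | "is_var_app L" | "\<not> is_Abs L" "\<not> is_var_app L" by blast
  then show ?thesis
  proof cases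
    case 1
    from \<open>ipar L N\<close> this show ?thesis using M_L by cases auto
  next
    case 2
    then show ?thesis using M_L by (blast intro: has_hnf_head_rtranclp hnf_has_hnf var_app_hnf)
  next
    case 3
    then show ?thesis using ipar_head_step[OF \<open>ipar L N\<close>] M_L
      by (blast intro: rtranclp.rtrancl_into_rtrancl)
  qed
qed

lemma par_has_hnf_backward: "(head ^^ n) N H \<Longrightarrow> is_hnf H \<Longrightarrow> par M N \<Longrightarrow> has_hnf M"
proof (induct n arbitrary: M N H rule: less_induct)
  case (less n)
  note IH_length = less.hyps
  from less.prems show ?case
  proof (induct N arbitrary: M H rule: measure_induct_rule[of size])
    case (less N)
    from par_head_progress[OF less.prems(3)] show ?case
    proof (elim disjE exE conjE)
      fix s t assume "head\<^sup>*\<^sup>* M (Abs s)" "N = Abs t" "par s t"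
      moreover from this less.prems obtain H0 where "(head ^^ n) t H0" "is_hnf H0"
        by (auto dest: relpowp_head_AbsD)
      moreover have "size t < size N" using \<open>N = Abs t\<close> by simp
      ultimately have "has_hnf s" using less.hyps by blast
      then show ?thesis using \<open>head\<^sup>*\<^sup>* M (Abs s)\<close> by (blast intro: has_hnf_head_rtranclp has_hnf_Abs)
    next
      fix M' N' assume M': "head\<^sup>*\<^sup>* M M'" and N': "head N N'" and "par M' N'"
      have "n \<noteq> 0" using less.prems(1,2) N' hnf_no_head by (metis relpowp_0_E)
      then obtain m where "n = Suc m" by (cases n) auto
      with less.prems(1) N' have "(head ^^ m) N' H" by (metis relpowp_Suc_D2 head_det)
      then have "has_hnf M'" using IH_length \<open>n = Suc m\<close> less.prems(2) \<open>par M' N'\<close> by blast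
      with M' show ?thesis by (rule has_hnf_head_rtranclp)
    qed
  qed
qed

section \<open>Head reduction lengths do not increase along parallel reduction\<close>

text \<open>The last conjunct is what lets the simulation pass through the function position of
  an application.\<close>
lemma head_par_simulation:
  "head M M' \<Longrightarrow> par M N \<Longrightarrow>
     par M' N \<or> (\<exists>N'. head N N' \<and> par M' N' \<and> (\<not> is_Abs M \<longrightarrow> \<not> is_Abs N))"
proof (induct arbitrary: N rule: head.induct)
  case (head_redex s t)
  then show ?case
  proof (cases rule: par_redexE)
    case (1 s' t')
    then show ?thesis by (auto intro!: head.head_redex par_subst)
  next
    case (2 s' t')
    then show ?thesis by (auto intro!: par_subst)
  qed
next
  case (head_app s s' t)
  have "\<not> is_Abs s" using head_app(3) by (cases s) auto
  with head_app.prems obtain u v where uv: "N = App u v" "par s u" "par t v" by (rule par_AppE)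
  from head_app.hyps(2)[OF uv(2)] show ?case
  proof (elim disjE exE conjE)
    assume "par s' u"
    then show ?thesis using uv by (auto intro: par_AppI)
  next
    fix u' assume "head u u'" "par s' u'" "\<not> is_Abs s \<longrightarrow> \<not> is_Abs u"
    with \<open>\<not> is_Abs s\<close> have "head (App u v) (App u' v)" by (auto intro: head.head_app)
    then show ?thesis using uv \<open>par s' u'\<close> by (auto intro: par_AppI)
  qed
next
  case (head_abs s s')
  from head_abs.prems obtain u where "N = Abs u" "par s u" by (rule par_AbsE)
  with head_abs.hyps(2) show ?case by (auto intro: head.head_abs par_AbsI)
qed

lemma head_relpowp_par:
  "(head ^^ k) M H \<Longrightarrow> par M N \<Longrightarrow> \<exists>k' H'. k' \<le> k \<and> (head ^^ k') N H' \<and> par H H'"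
proof (induct k arbitrary: M N)
  case 0
  then show ?case by auto
next
  case (Suc k)
  from Suc.prems(1) obtain M1 where M1: "head M M1" "(head ^^ k) M1 H" by (blast dest: relpowp_Suc_D2)
  from head_par_simulation[OF M1(1) Suc.prems(2)] show ?case
  proof (elim disjE exE conjE)
    assume "par M1 N"
    then show ?thesis using Suc.hyps[OF M1(2)] le_SucI by blast
  next
    fix N' assume "head N N'" "par M1 N'"
    with Suc.hyps[OF M1(2)] obtain k' H' where "k' \<le> k" "(head ^^ k') N' H'" "par H H'" by blast
    with \<open>head N N'\<close> show ?thesis by (blast intro: relpowp_Suc_I2)
  qed
qed

inductive spine_red :: "dB \<Rightarrow> dB \<Rightarrow> bool" where
  spine_red_Var: "spine_red (Var i) (Var i)"
| spine_red_Abs: "spine_red s t \<Longrightarrow> spine_red (Abs s) (Abs t)"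
| spine_red_App: "spine_red s t \<Longrightarrow> par\<^sup>*\<^sup>* u v \<Longrightarrow> spine_red (App s u) (App t v)"

lemma spine_red_refl: "spine_red t t"
  by (induct t) (auto intro: spine_red.intros)

lemma spine_red_trans: "spine_red a b \<Longrightarrow> spine_red b c \<Longrightarrow> spine_red a c"
proof (induct arbitrary: c rule: spine_red.induct)
  case (spine_red_Abs s t)
  from spine_red_Abs.prems show ?case
    by (cases rule: spine_red.cases) (auto intro: spine_red.spine_red_Abs spine_red_Abs.hyps)
next
  case (spine_red_App s t u v)
  from spine_red_App.prems show ?case
    by (cases rule: spine_red.cases)
      (auto intro: spine_red.spine_red_App spine_red_App.hyps rtranclp_trans[OF spine_red_App.hyps(3)])
qed simp

lemma par_var_app: "par H H' \<Longrightarrow> is_var_app H \<Longrightarrow> is_var_app H' \<and> spine_red H H'"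
proof (induct H arbitrary: H')
  case (Var i)
  then show ?case by (auto dest: par_VarE intro: spine_red_Var)
next
  case (App s u)
  have "\<not> is_Abs s" using App.prems(2) by (cases s) auto
  with App.prems(1) obtain t v where "H' = App t v" "par s t" "par u v" by (rule par_AppE)
  with App show ?case by (auto intro: spine_red_App)
qed simp

lemma par_hnf: "par H H' \<Longrightarrow> is_hnf H \<Longrightarrow> is_hnf H' \<and> spine_red H H'"
proof (induct H arbitrary: H')
  case (Abs s)
  from Abs.prems(1) obtain t where "H' = Abs t" "par s t" by (rule par_AbsE)
  with Abs show ?case by (auto intro: spine_red_Abs)
qed (auto dest: par_var_app intro: var_app_hnf)

lemma par_has_hnf_hlen:
  assumes "par M N" "has_hnf M"
  shows "has_hnf N" "hlen N \<le> hlen M" "spine_red (hnf M) (hnf N)"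
proof -
  from assms(2) obtain k H where kH: "(head ^^ k) M H" "is_hnf H" unfolding has_hnf_def by blast
  with assms(1) obtain k' H' where kH': "k' \<le> k" "(head ^^ k') N H'" "par H H'"
    using head_relpowp_par by blast
  with kH(2) have "is_hnf H'" "spine_red H H'" using par_hnf by auto
  then show "has_hnf N" "hlen N \<le> hlen M" "spine_red (hnf M) (hnf N)"
    using kH kH' hlen_hnf_eqI unfolding has_hnf_def by auto
qed

lemma par_has_hnf_iff: "par M N \<Longrightarrow> has_hnf N \<longleftrightarrow> has_hnf M"
  using par_has_hnf_backward par_has_hnf_hlen(1) unfolding has_hnf_def by blast

lemma par_rtranclp_has_hnf_hlen:
  assumes "par\<^sup>*\<^sup>* M N"
  shows "(has_hnf N \<longleftrightarrow> has_hnf M) \<and>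
    (has_hnf M \<longrightarrow> hlen N \<le> hlen M \<and> spine_red (hnf M) (hnf N))"
  using assms
proof (induct rule: rtranclp_induct)
  case base
  then show ?case by (simp add: spine_red_refl)
next
  case (step N N')
  then show ?case
    using par_has_hnf_iff[OF step(2)] par_has_hnf_hlen[OF step(2)] by (auto intro: spine_red_trans)
qed

declare bt_gen.ctr[simp del] bt_gen.disc[simp del] bt_gen.disc_iff[simp del] bt_gen.sel[simp del]

definition bt_undef :: "dB \<times> bool \<Rightarrow> bool" where
  "bt_undef x \<longleftrightarrow> snd x \<and> \<not> has_hnf (fst x)"

definition bt_node :: "dB \<times> bool \<Rightarrow> dB" where
  "bt_node x = (if snd x then hnf (fst x) else fst x)"

definition bt_ann :: "dB \<times> bool \<Rightarrow> nat option" where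
  "bt_ann x = (if snd x then Some (hlen (fst x)) else None)"

lemma bt_gen_unfold:
  "bt_gen x = (if bt_undef x then ABot else
     (case bt_node x of
        Var i \<Rightarrow> AVar (bt_ann x) i
      | Abs s \<Rightarrow> ALam (bt_ann x) (bt_gen (s, False))
      | App s t \<Rightarrow> AApp (bt_ann x) (bt_gen (s, False)) (bt_gen (t, True))))"
  by (subst bt_gen.code) (auto simp: bt_undef_def bt_node_def bt_ann_def split: dB.split)

definition ann_ge :: "nat option \<Rightarrow> nat option \<Rightarrow> bool" where
  "ann_ge a b \<longleftrightarrow> (a = None \<and> b = None) \<or> (\<exists>k1 k2. a = Some k1 \<and> b = Some k2 \<and> k1 \<ge> k2)"

definition bt_rel :: "dB \<times> bool \<Rightarrow> dB \<times> bool \<Rightarrow> bool" where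
  "bt_rel x y \<longleftrightarrow> snd x = snd y \<and>
     (if snd x then par\<^sup>*\<^sup>* (fst x) (fst y) else spine_red (fst x) (fst y))"

lemma bt_rel_node:
  assumes "bt_rel x y"
  shows "bt_undef y = bt_undef x"
    and "\<not> bt_undef x \<Longrightarrow> spine_red (bt_node x) (bt_node y) \<and> ann_ge (bt_ann x) (bt_ann y)"
  using assms par_rtranclp_has_hnf_hlen[of "fst x" "fst y"]
  by (auto simp: bt_rel_def bt_undef_def bt_node_def bt_ann_def ann_ge_def split: if_splits)

lemma root_ann_bt_gen: "root_ann (bt_gen x) = (if bt_undef x then None else bt_ann x)"
  by (subst bt_gen_unfold) (simp add: root_ann_def split: dB.split)

lemma bt_rel_root_ann: "bt_rel x y \<Longrightarrow> ann_ge (root_ann (bt_gen x)) (root_ann (bt_gen y))"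
  using bt_rel_node[of x y] by (simp add: root_ann_bt_gen ann_ge_def)

lemma bt_rel_bt_gen_cases:
  assumes "bt_rel x y"
  shows "bt_gen x = ABot \<and> bt_gen y = ABot
    \<or> (\<exists>a b i. bt_gen x = AVar a i \<and> bt_gen y = AVar b i)
    \<or> (\<exists>a b x' y'. bt_rel x' y' \<and> bt_gen x = ALam a (bt_gen x') \<and> bt_gen y = ALam b (bt_gen y'))
    \<or> (\<exists>a b x1 y1 x2 y2. bt_rel x1 y1 \<and> bt_rel x2 y2 \<and>
         bt_gen x = AApp a (bt_gen x1) (bt_gen x2) \<and> bt_gen y = AApp b (bt_gen y1) (bt_gen y2))"
proof (cases "bt_undef x")
  case True
  then show ?thesis using bt_rel_node(1)[OF assms] by (simp add: bt_gen_unfold[of x] bt_gen_unfold[of y])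
next
  case False
  with bt_rel_node[OF assms] have defined: "\<not> bt_undef x" "\<not> bt_undef y"
    and "spine_red (bt_node x) (bt_node y)" by auto
  from this(3) show ?thesis
  proof cases
    case (spine_red_Var i)
    then show ?thesis using defined by (simp add: bt_gen_unfold[of x] bt_gen_unfold[of y])
  next
    case (spine_red_Abs s t)
    then have "bt_rel (s, False) (t, False)" by (simp add: bt_rel_def)
    then show ?thesis using spine_red_Abs defined
      by (simp add: bt_gen_unfold[of x] bt_gen_unfold[of y]) blast
  next
    case (spine_red_App s t u v)
    then have "bt_rel (s, False) (t, False)" "bt_rel (u, True) (v, True)" by (simp_all add: bt_rel_def)
    then show ?thesis using spine_red_App defined
      by (simp add: bt_gen_unfold[of x] bt_gen_unfold[of y]) blast
  qed
qed

lemma bt_rel_subtree_at: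
  "bt_rel x y \<Longrightarrow> subtree_at (bt_gen x) p = Some s1 \<Longrightarrow> subtree_at (bt_gen y) p = Some s2 \<Longrightarrow>
     \<exists>x' y'. bt_rel x' y' \<and> s1 = bt_gen x' \<and> s2 = bt_gen y'"
proof (induct p arbitrary: x y)
  case (Cons i p)
  from bt_rel_bt_gen_cases[OF Cons.prems(1)] show ?case
  proof (elim disjE exE conjE)
    fix a b x' y' assume "bt_rel x' y'" "bt_gen x = ALam a (bt_gen x')" "bt_gen y = ALam b (bt_gen y')"
    then show ?thesis using Cons.hyps[of x' y'] Cons.prems(2,3) by (simp split: if_splits)
  next
    fix a b x1 y1 x2 y2 assume "bt_rel x1 y1" "bt_rel x2 y2"
      "bt_gen x = AApp a (bt_gen x1) (bt_gen x2)" "bt_gen y = AApp b (bt_gen y1) (bt_gen y2)"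
    then show ?thesis using Cons.hyps[of x1 y1] Cons.hyps[of x2 y2] Cons.prems(2,3)
      by (simp split: if_splits)
  qed (use Cons.prems(2) in simp_all)
qed auto

lemma bt_rel_erase: "bt_rel x y \<Longrightarrow> erase (bt_gen x) = erase (bt_gen y)"
proof (coinduction arbitrary: x y rule: atree.coinduct)
  case Eq_atree
  then show ?case
    using bt_rel_bt_gen_cases[OF Eq_atree] by (auto simp: erase_def; blast)
qed

theorem proposition4p5:
  fixes M N :: dB
  assumes "beta_star M N"
  shows "tree_ge (BTc M) (BTc N)"
proof -
  have "par\<^sup>*\<^sup>* M N" using assms by (metis mono_rtranclp beta_par)
  then have rel: "bt_rel (M, True) (N, True)" by (simp add: bt_rel_def)
  show ?thesis unfolding tree_ge_def BTc_def
  proof (intro conjI allI impI)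
    show "erase (bt_gen (M, True)) = erase (bt_gen (N, True))" using rel by (rule bt_rel_erase)
  next
    fix p s1 s2
    assume "subtree_at (bt_gen (M, True)) p = Some s1" "subtree_at (bt_gen (N, True)) p = Some s2"
    with rel obtain x y where "bt_rel x y" "s1 = bt_gen x" "s2 = bt_gen y"
      using bt_rel_subtree_at by blast
    then show "root_ann s1 = None \<and> root_ann s2 = None \<or>
        (\<exists>k1 k2. root_ann s1 = Some k1 \<and> root_ann s2 = Some k2 \<and> k1 \<ge> k2)"
      using bt_rel_root_ann[of x y] unfolding ann_ge_def by simp
  qed
qed

end
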